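(* Let $G$ be a finitely generated subgroup of $\mathrm{Aut}(X^* )$. Then $G$ has well-approximated subgroups if and only if $G$ is LERF and has the congruence subgroup property.
   Context: $X^*$ is the free monoid on a finite set $X$, viewed as a rooted tree; $X^n$ is level $n$, $\mathrm{Aut}(X^* )$ the group of prefix-preserving bijections, and $\mathrm{st}_G(n)$ the subgroup of $G$ fixing every vertex of $X^n$. $G$ has well-approximated subgroups if $\bigcap_{n\ge0}H\,\mathrm{st}_G(n)=H$ for every finitely generated $H\le G$. $G$ is LERF if every finitely generated subgroup is an intersection of finite index subgroups. $G$ has the congruence subgroup property if every finite index subgroup of $G$ contains $\mathrm{st}_G(n)$ for some $n$. *)

theory Defs
  imports "HOL-Algebra.Algebra" "HOL-Library.Sublist"
begin

text \<open>The alphabet X is the universe of a finite type 'a; X^* is 'a list.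
  Aut(X^*): bijections of X^* preserving the prefix relation (in both directions),
  a group under composition.\<close>

definition AutT :: "('a list \<Rightarrow> 'a list) monoid" where
  "AutT = \<lparr>carrier = {g. bij g \<and> (\<forall>u v. prefix u v \<longleftrightarrow> prefix (g u) (g v))},
           monoid.mult = (\<circ>), one = id\<rparr>"

definition grp :: "('a list \<Rightarrow> 'a list) set \<Rightarrow> ('a list \<Rightarrow> 'a list) monoid" where
  "grp G = AutT\<lparr>carrier := G\<rparr>"

definition st :: "('a list \<Rightarrow> 'a list) set \<Rightarrow> nat \<Rightarrow> ('a list \<Rightarrow> 'a list) set" where
  "st G n = {g \<in> G. \<forall>v. length v = n \<longrightarrow> g v = v}"

definition fg_subgroup_of_Aut :: "('a list \<Rightarrow> 'a list) set \<Rightarrow> bool" where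
  "fg_subgroup_of_Aut G \<longleftrightarrow> subgroup G AutT \<and>
     (\<exists>S. finite S \<and> S \<subseteq> G \<and> generate AutT S = G)"

definition fg_sub :: "('a list \<Rightarrow> 'a list) set \<Rightarrow> ('a list \<Rightarrow> 'a list) set \<Rightarrow> bool" where
  "fg_sub H G \<longleftrightarrow> subgroup H (grp G) \<and>
     (\<exists>S. finite S \<and> S \<subseteq> H \<and> generate (grp G) S = H)"

definition finite_index :: "('a list \<Rightarrow> 'a list) set \<Rightarrow> ('a list \<Rightarrow> 'a list) set \<Rightarrow> bool" where
  "finite_index K G \<longleftrightarrow> subgroup K (grp G) \<and> finite (rcosets\<^bsub>grp G\<^esub> K)"

definition well_approximated :: "('a list \<Rightarrow> 'a list) set \<Rightarrow> bool" where
  "well_approximated G \<longleftrightarrow>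
     (\<forall>H. fg_sub H G \<longrightarrow> (\<Inter>n. H <#>\<^bsub>grp G\<^esub> st G n) = H)"

definition LERF :: "('a list \<Rightarrow> 'a list) set \<Rightarrow> bool" where
  "LERF G \<longleftrightarrow>
     (\<forall>H. fg_sub H G \<longrightarrow> (\<exists>\<K>. (\<forall>K\<in>\<K>. finite_index K G) \<and> H = \<Inter>\<K>))"

definition CSP :: "('a list \<Rightarrow> 'a list) set \<Rightarrow> bool" where
  "CSP G \<longleftrightarrow> (\<forall>K. finite_index K G \<longrightarrow> (\<exists>n. st G n \<subseteq> K))"

end

theory Submission
  imports Defs
begin

(* The level stabiliser st_G(n) is the kernel of the action of G on the finite level X^n, so it is a
   normal subgroup of finite index and every H st_G(n) is a finite index subgroup containing H; this
   gives LERF from well-approximation, and conversely, given LERF and the congruence subgroup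
   property, each finite index K \<supseteq> H contains some H st_G(n).
   For the congruence subgroup property, a finite index subgroup K is finitely generated by Schreier's
   lemma, so K = \<Inter>n K st_G(n). The K st_G(n) form a decreasing sequence of unions of the finitely
   many cosets of K, hence K st_G(N) = K for some N, i.e. st_G(N) \<subseteq> K. *)

lemma AutT_simps [simp]:
  "carrier AutT = {g. bij g \<and> (\<forall>u v. prefix u v \<longleftrightarrow> prefix (g u) (g v))}"
  "monoid.mult AutT = (\<circ>)" "one AutT = id"
  by (simp_all add: AutT_def)

lemma group_AutT: "group (AutT :: ('a list \<Rightarrow> 'a list) monoid)"
proof (rule groupI)
  fix x y :: "'a list \<Rightarrow> 'a list"
  assume "x \<in> carrier AutT" "y \<in> carrier AutT"
  then show "x \<otimes>\<^bsub>AutT\<^esub> y \<in> carrier AutT"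
    by (simp add: bij_comp)
next
  fix x :: "'a list \<Rightarrow> 'a list"
  assume "x \<in> carrier AutT"
  then have "bij x" and "\<And>u v. prefix u v \<longleftrightarrow> prefix (x u) (x v)"
    by simp_all
  then have "Hilbert_Choice.inv x \<in> carrier AutT" and "Hilbert_Choice.inv x \<circ> x = id"
    by (auto simp: bij_imp_bij_inv bij_is_inj) (metis bij_inv_eq_iff)+
  then show "\<exists>y\<in>carrier AutT. y \<otimes>\<^bsub>AutT\<^esub> x = \<one>\<^bsub>AutT\<^esub>"
    by auto
qed (auto simp: comp_assoc)

lemma card_prefixes: "card {u. prefix u v} = Suc (length v)"
proof -
  have "{u. prefix u v} = set (prefixes v)"
    by auto
  then show ?thesis
    using distinct_card[OF distinct_prefixes] by simp
qed

lemma AutT_length: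
  assumes "g \<in> carrier AutT"
  shows "length (g v) = length v"
proof -
  from assms have "bij g" and "\<And>u v. prefix (g u) (g v) \<longleftrightarrow> prefix u v"
    by auto
  then have "{w. prefix w (g v)} = g ` {u. prefix u v}"
    by (auto simp: image_iff) (metis bij_pointE)
  moreover have "inj_on g {u. prefix u v}"
    using \<open>bij g\<close> bij_is_inj inj_on_subset by blast
  ultimately have "card {w. prefix w (g v)} = card {u. prefix u v}"
    by (simp add: card_image)
  then show ?thesis
    by (simp add: card_prefixes)
qed

lemma (in group) finite_rcosets_mono:
  assumes N: "subgroup N G" and K: "subgroup K G" and "N \<subseteq> K" and fin: "finite (rcosets N)"
  shows "finite (rcosets K)"
proof -
  have "K <#> N = K"
    using set_mult_subgroup_idem[OF K] subgroup_incl[OF N K \<open>N \<subseteq> K\<close>] .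
  then have "K <#> (N #> g) = K #> g" if "g \<in> carrier G" for g
    using setmult_rcos_assoc[OF subgroup.subset[OF K] subgroup.subset[OF N] that] by simp
  then have "rcosets K = (\<lambda>c. K <#> c) ` (rcosets N)"
    by (auto simp: RCOSETS_def)
  then show ?thesis
    using fin by simp
qed

lemma (in group) subgroup_eq_Union_rcosets:
  assumes K: "subgroup K G" and A: "subgroup A G" and "K \<subseteq> A"
  shows "A = \<Union>{c \<in> rcosets K. c \<subseteq> A}"
proof
  show "A \<subseteq> \<Union>{c \<in> rcosets K. c \<subseteq> A}"
  proof
    fix a assume "a \<in> A"
    then have "a \<in> carrier G"
      using subgroup.subset[OF A] by blast
    moreover have "K #> a \<subseteq> A"
      using \<open>a \<in> A\<close> \<open>K \<subseteq> A\<close> subgroup.m_closed[OF A] by (auto simp: r_coset_def)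
    ultimately show "a \<in> \<Union>{c \<in> rcosets K. c \<subseteq> A}"
      using rcos_self[OF _ K] rcosetsI[OF subgroup.subset[OF K]] by blast
  qed
qed blast

lemma (in group) subgroup_set_mult_normal:
  assumes "subgroup H G" and "N \<lhd> G"
  shows "subgroup (H <#> N) G"
  using mult_norm_subgroup[OF assms(2,1)] commut_normal[OF assms] by simp

lemma (in group) subgroups_subset_set_mult:
  assumes H: "subgroup H G" and K: "subgroup K G"
  shows "H \<subseteq> H <#> K" and "K \<subseteq> H <#> K"
proof
  fix h assume "h \<in> H"
  then have "h \<otimes> \<one> \<in> H <#> K"
    using subgroup.one_closed[OF K] unfolding set_mult_def by blast
  then show "h \<in> H <#> K"
    using \<open>h \<in> H\<close> subgroup.subset[OF H] by auto
next
  show "K \<subseteq> H <#> K"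
  proof
    fix k assume "k \<in> K"
    then have "\<one> \<otimes> k \<in> H <#> K"
      using subgroup.one_closed[OF H] unfolding set_mult_def by blast
    then show "k \<in> H <#> K"
      using \<open>k \<in> K\<close> subgroup.subset[OF K] by auto
  qed
qed

lemma (in group) finite_transversal:
  assumes "subgroup K G" and "finite (rcosets K)"
  obtains T where "finite T" "\<one> \<in> T" "T \<subseteq> carrier G"
    "\<And>g. g \<in> carrier G \<Longrightarrow> \<exists>t\<in>T. g \<in> K #> t"
proof
  define T where "T = insert \<one> ((\<lambda>c. SOME t. t \<in> c) ` (rcosets K))"
  show "finite T" "\<one> \<in> T"
    using assms(2) by (simp_all add: T_def)
  have some_rcos: "(SOME t. t \<in> K #> g) \<in> K #> g" if "g \<in> carrier G" for g
    using rcos_self[OF that assms(1)] by (rule someI)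
  then show "T \<subseteq> carrier G"
    using r_coset_subset_G[OF subgroup.subset[OF assms(1)]] by (fastforce simp: T_def RCOSETS_def)
  show "\<exists>t\<in>T. g \<in> K #> t" if "g \<in> carrier G" for g
  proof
    let ?t = "SOME t. t \<in> K #> g"
    show "?t \<in> T"
      using rcosetsI[OF subgroup.subset[OF assms(1)] that] by (auto simp: T_def)
    have "K #> g = K #> ?t"
      using repr_independence[OF some_rcos[OF that] that assms(1)] .
    then show "g \<in> K #> ?t"
      using rcos_self[OF that assms(1)] by simp
  qed
qed

lemma (in group) generate_subset_right_mult_closed:
  assumes "S \<subseteq> carrier G" and "M \<subseteq> carrier G" and "\<one> \<in> M"
    and closed: "\<And>x s. x \<in> M \<Longrightarrow> s \<in> S \<Longrightarrow> x \<otimes> s \<in> M \<and> x \<otimes> inv s \<in> M"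
  shows "generate G S \<subseteq> M"
proof -
  have "x \<otimes> g \<in> M" if "g \<in> generate G S" "x \<in> M" for g x
    using that
  proof (induction arbitrary: x)
    case one
    then show ?case
      using assms(2) by auto
  next
    case (incl s)
    then show ?case
      using closed by blast
  next
    case (inv s)
    then show ?case
      using closed by blast
  next
    case (eng g1 g2)
    then have "x \<otimes> (g1 \<otimes> g2) = x \<otimes> g1 \<otimes> g2"
      using assms(2) generate_in_carrier[OF assms(1)] by (auto simp: m_assoc)
    then show ?case
      using eng by simp
  qed
  from this[OF _ \<open>\<one> \<in> M\<close>] show ?thesis
    using generate_in_carrier[OF assms(1)] by (metis l_one subsetI)
qed

lemma (in group) subgroup_eq_of_set_mult_cover:
  assumes H: "subgroup H G" and K: "subgroup K G" and "H \<subseteq> K"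
    and "T \<subseteq> carrier G" and "carrier G \<subseteq> H <#> T" and "T \<inter> K \<subseteq> H"
  shows "H = K"
proof
  show "K \<subseteq> H"
  proof
    fix k assume "k \<in> K"
    then obtain h t where ht: "h \<in> H" "t \<in> T" "k = h \<otimes> t"
      using assms(5) subgroup.subset[OF K] unfolding set_mult_def by blast
    moreover have "h \<in> carrier G" "t \<in> carrier G"
      using ht(1,2) subgroup.subset[OF H] \<open>T \<subseteq> carrier G\<close> by blast+
    ultimately have "t = inv h \<otimes> k"
      by (simp add: m_assoc[symmetric])
    then have "t \<in> K"
      using ht(1) \<open>H \<subseteq> K\<close> \<open>k \<in> K\<close> K by (auto intro: subgroup.m_closed subgroup.m_inv_closed)
    then have "t \<in> H"
      using ht(2) \<open>T \<inter> K \<subseteq> H\<close> by blast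
    then show "k \<in> H"
      using ht(1,3) H by (simp add: subgroup.m_closed)
  qed
qed (rule \<open>H \<subseteq> K\<close>)

lemma (in group) set_mult_transversal_right_mult_closed:
  assumes H: "subgroup H G" and T: "T \<subseteq> carrier G" and "s \<in> carrier G" and "K \<subseteq> carrier G"
    and cover: "\<And>g. g \<in> carrier G \<Longrightarrow> \<exists>t\<in>T. g \<in> K #> t"
    and closed: "\<And>t t'. t \<in> T \<Longrightarrow> t' \<in> T \<Longrightarrow> t \<otimes> s \<otimes> inv t' \<in> K \<Longrightarrow> t \<otimes> s \<otimes> inv t' \<in> H"
    and "x \<in> H <#> T"
  shows "x \<otimes> s \<in> H <#> T"
proof -
  from \<open>x \<in> H <#> T\<close> obtain h t where ht: "h \<in> H" "t \<in> T" "x = h \<otimes> t"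
    unfolding set_mult_def by blast
  have "t \<otimes> s \<in> carrier G"
    using ht(2) T \<open>s \<in> carrier G\<close> by blast
  then obtain t' k where t'k: "t' \<in> T" "k \<in> K" "t \<otimes> s = k \<otimes> t'"
    using cover unfolding r_coset_def by blast
  have carrier: "h \<in> carrier G" "t \<in> carrier G" "k \<in> carrier G" "t' \<in> carrier G"
    using ht t'k T subgroup.subset[OF H] \<open>K \<subseteq> carrier G\<close> by blast+
  have "k = t \<otimes> s \<otimes> inv t'"
    using t'k(3) carrier \<open>s \<in> carrier G\<close> by (simp add: m_assoc)
  then have "k \<in> H"
    using closed ht(2) t'k(1,2) by blast
  then have "h \<otimes> k \<in> H"
    using ht(1) H by (simp add: subgroup.m_closed)
  moreover have "x \<otimes> s = (h \<otimes> k) \<otimes> t'"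
    using ht(3) t'k(3) carrier \<open>s \<in> carrier G\<close> by (simp add: m_assoc)
  ultimately show ?thesis
    using t'k(1) unfolding set_mult_def by blast
qed

(* With T a transversal containing 1 and S' the generators, their inverses and 1,
   the elements t s t'^-1 lying in K generate a subgroup H \<subseteq> K such that H T is closed under
   right multiplication by S', hence H T = G; as T \<inter> K \<subseteq> H, this forces H = K. *)
lemma (in group) finite_index_subgroup_finitely_generated:
  assumes S: "finite S" "S \<subseteq> carrier G" "generate G S = carrier G"
    and K: "subgroup K G" "finite (rcosets K)"
  obtains F where "finite F" "F \<subseteq> K" "generate G F = K"
proof -
  interpret K: subgroup K G
    by (rule K(1))
  obtain T where T: "finite T" "\<one> \<in> T" "T \<subseteq> carrier G"
    and cover: "\<And>g. g \<in> carrier G \<Longrightarrow> \<exists>t\<in>T. g \<in> K #> t"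
    using finite_transversal[OF K] by blast
  define S' where "S' = insert \<one> (S \<union> (\<lambda>s. inv s) ` S)"
  have S': "finite S'" "\<one> \<in> S'" "S' \<subseteq> carrier G"
    using S by (auto simp: S'_def)
  define F where "F = K \<inter> {t \<otimes> s \<otimes> inv t' | t s t'. t \<in> T \<and> s \<in> S' \<and> t' \<in> T}"
  define H where "H = generate G F"
  have "{t \<otimes> s \<otimes> inv t' | t s t'. t \<in> T \<and> s \<in> S' \<and> t' \<in> T}
      = (\<lambda>(t, s, t'). t \<otimes> s \<otimes> inv t') ` (T \<times> S' \<times> T)"
    by force
  then have "finite F" "F \<subseteq> K"
    using T S' by (simp_all add: F_def)
  have "H \<subseteq> K"
    unfolding H_def using \<open>F \<subseteq> K\<close> K(1) by (rule generate_subgroup_incl)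
  interpret H: subgroup H G
    unfolding H_def using \<open>F \<subseteq> K\<close> K.subset by (intro generate_is_subgroup) blast
  have "x \<otimes> s \<in> H <#> T" if "x \<in> H <#> T" "s \<in> S'" for x s
    using set_mult_transversal_right_mult_closed[OF H.subgroup_axioms T(3) _ K.subset cover _ that(1)]
      that(2) S'(3) unfolding H_def F_def by (blast intro: generate.incl)
  moreover have "\<one> \<in> H <#> T"
    using H.one_closed T(2) l_one[OF one_closed] unfolding set_mult_def by blast
  ultimately have "generate G S \<subseteq> H <#> T"
    using generate_subset_right_mult_closed[OF S(2) setmult_subset_G[OF H.subset T(3)]]
    by (simp add: S'_def)
  then have "carrier G \<subseteq> H <#> T"
    using S(3) by simp
  moreover have "T \<inter> K \<subseteq> H"
  proof -
    have "t = t \<otimes> \<one> \<otimes> inv \<one>" if "t \<in> T" for t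
      using that T(3) by auto
    then show ?thesis
      using T(2) S'(2) unfolding H_def F_def by (blast intro: generate.incl)
  qed
  ultimately have "H = K"
    by (rule subgroup_eq_of_set_mult_cover[OF H.subgroup_axioms K(1) \<open>H \<subseteq> K\<close> T(3)])
  with \<open>finite F\<close> \<open>F \<subseteq> K\<close> show thesis
    unfolding H_def by (rule that)
qed

lemma antimono_finite_unions_stabilise:
  fixes A :: "nat \<Rightarrow> 'a set"
  assumes "finite C" and "antimono A" and A: "\<And>n. A n = \<Union>{c \<in> C. c \<subseteq> A n}"
  shows "\<exists>N. A N = (\<Inter>n. A n)"
proof -
  have "\<forall>c. \<exists>n. \<not> c \<subseteq> (\<Inter>n. A n) \<longrightarrow> \<not> c \<subseteq> A n"
    by blast
  then obtain m where m: "\<And>c. \<not> c \<subseteq> (\<Inter>n. A n) \<Longrightarrow> \<not> c \<subseteq> A (m c)"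
    by metis
  define N where "N = (\<Sum>c\<in>C. m c)"
  have "c \<subseteq> (\<Inter>n. A n)" if "c \<in> C" "c \<subseteq> A N" for c
  proof (rule ccontr)
    assume "\<not> c \<subseteq> (\<Inter>n. A n)"
    moreover have "A N \<subseteq> A (m c)"
      using \<open>antimono A\<close> member_le_sum[OF that(1) _ \<open>finite C\<close>, of m]
      unfolding N_def by (auto dest: antimonoD)
    ultimately show False
      using m that(2) by blast
  qed
  then have "A N \<subseteq> (\<Inter>n. A n)"
    using A[of N] by blast
  then show ?thesis
    by blast
qed

definition level :: "nat \<Rightarrow> 'a list set" where
  "level n = {v. length v = n}"

lemma finite_level: "finite (UNIV :: 'a set) \<Longrightarrow> finite (level n :: 'a list set)"
  using finite_lists_length_eq[of "UNIV :: 'a set" n] by (simp add: level_def)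

definition level_action :: "nat \<Rightarrow> ('a list \<Rightarrow> 'a list) \<Rightarrow> 'a list \<Rightarrow> 'a list" where
  "level_action n g = restrict g (level n)"

locale aut_subgroup =
  fixes G :: "('a list \<Rightarrow> 'a list) set"
  assumes subgroup_AutT: "subgroup G AutT"
begin

lemma grp_simps [simp]: "carrier (grp G) = G" "monoid.mult (grp G) = (\<circ>)" "one (grp G) = id"
  by (simp_all add: grp_def)

sublocale Gr: group "grp G"
  unfolding grp_def by (rule subgroup.subgroup_is_group[OF subgroup_AutT group_AutT])

lemma length_apply: "g \<in> G \<Longrightarrow> length (g v) = length v"
  using AutT_length subgroup.subset[OF subgroup_AutT] by blast

lemma prefix_apply_iff: "g \<in> G \<Longrightarrow> prefix (g u) (g v) \<longleftrightarrow> prefix u v"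
  using subgroup.subset[OF subgroup_AutT] by auto

lemma bij_betw_level:
  assumes "g \<in> G"
  shows "bij_betw g (level n) (level n)"
proof -
  have "bij g"
    using assms subgroup.subset[OF subgroup_AutT] by auto
  moreover have "g ` level n = level n"
    using length_apply[OF assms] \<open>bij g\<close> by (auto simp: level_def image_iff) (metis bij_pointE)
  ultimately show ?thesis
    by (metis bij_betw_subset subset_UNIV)
qed

lemma level_action_Bij: "g \<in> G \<Longrightarrow> level_action n g \<in> Bij (level n)"
  using bij_betw_level by (simp add: Bij_def level_action_def)

lemma level_action_comp:
  assumes "h \<in> G"
  shows "level_action n (g \<circ> h) = compose (level n) (level_action n g) (level_action n h)"
  using length_apply[OF assms] by (auto simp: fun_eq_iff compose_def level_action_def level_def)

lemma level_action_group_hom: "group_hom (grp G) (BijGroup (level n)) (level_action n)"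
proof (intro group_hom.intro group_hom_axioms.intro homI)
  show "group (grp G)" "group (BijGroup (level n))"
    by (rule Gr.is_group, rule group_BijGroup)
  show "level_action n g \<in> carrier (BijGroup (level n))" if "g \<in> carrier (grp G)" for g
    using that level_action_Bij by (simp add: BijGroup_def)
  show "level_action n (g \<otimes>\<^bsub>grp G\<^esub> h)
      = level_action n g \<otimes>\<^bsub>BijGroup (level n)\<^esub> level_action n h"
    if "g \<in> carrier (grp G)" "h \<in> carrier (grp G)" for g h
    using that level_action_Bij level_action_comp by (simp add: BijGroup_def)
qed

lemma st_eq_kernel: "st G n = kernel (grp G) (BijGroup (level n)) (level_action n)"
  by (auto simp: st_def kernel_def BijGroup_def level_action_def level_def restrict_def fun_eq_iff)

lemma st_normal: "st G n \<lhd> grp G"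
  using group_hom.normal_kernel[OF level_action_group_hom] by (simp add: st_eq_kernel)

lemma st_subgroup: "subgroup (st G n) (grp G)"
  using st_normal by (rule normal_imp_subgroup)

lemma finite_rcosets_st:
  assumes "finite (UNIV :: 'a set)"
  shows "finite (rcosets\<^bsub>grp G\<^esub> st G n)"
proof -
  interpret group_hom "grp G" "BijGroup (level n)" "level_action n"
    by (rule level_action_group_hom)
  note kernel = st_eq_kernel[symmetric]
  have "carrier (BijGroup (level n)) \<subseteq> level n \<rightarrow>\<^sub>E (level n :: 'a list set)"
    by (simp add: BijGroup_def subset_iff extensional_funcset_def Bij_imp_extensional Bij_imp_funcset)
  then have "finite (carrier (BijGroup (level n :: 'a list set)))"
    by (rule finite_subset) (intro finite_PiE finite_level assms)
  moreover have "(\<lambda>C. the_elem (level_action n ` C)) ` carrier (grp G Mod st G n)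
      \<subseteq> carrier (BijGroup (level n))"
    using FactGroup_the_elem_mem[unfolded kernel] by blast
  ultimately have "finite ((\<lambda>C. the_elem (level_action n ` C)) ` carrier (grp G Mod st G n))"
    by (rule finite_subset[rotated])
  then have "finite (carrier (grp G Mod st G n))"
    using FactGroup_inj_on[unfolded kernel] by (rule finite_imageD)
  then show ?thesis
    by (simp add: FactGroup_def)
qed

lemma st_antimono: "antimono (st G)"
proof (rule antimonoI, rule subsetI)
  fix m n g assume "m \<le> n" "g \<in> st G n"
  then have "g \<in> G" and fix_n: "\<And>w. length w = n \<Longrightarrow> g w = w"
    by (auto simp: st_def)
  have "g v = v" if "length v = m" for v
  proof -
    define w where "w = v @ replicate (n - m) undefined"
    have "length w = n" "prefix v w"
      using that \<open>m \<le> n\<close> by (simp_all add: w_def)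
    then have "prefix (g v) w"
      using prefix_apply_iff[OF \<open>g \<in> G\<close>] fix_n by metis
    moreover have "length (g v) = length v"
      using length_apply[OF \<open>g \<in> G\<close>] .
    ultimately show "g v = v"
      using \<open>prefix v w\<close> by (metis prefix_length_prefix prefix_order.antisym order_refl)
  qed
  then show "g \<in> st G m"
    using \<open>g \<in> G\<close> by (simp add: st_def)
qed

lemma finite_index_if_st_subset:
  assumes "finite (UNIV :: 'a set)" and "subgroup K (grp G)" and "st G n \<subseteq> K"
  shows "finite_index K G"
  using Gr.finite_rcosets_mono[OF st_subgroup assms(2,3) finite_rcosets_st[OF assms(1)]] assms(2)
  by (simp add: finite_index_def)

lemma well_approximated_imp_LERF:
  assumes "finite (UNIV :: 'a set)" and "well_approximated G"
  shows "LERF G"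
  unfolding LERF_def
proof (intro allI impI)
  fix H assume "fg_sub H G"
  then have H: "subgroup H (grp G)" and "H = (\<Inter>n. H <#>\<^bsub>grp G\<^esub> st G n)"
    using assms(2) by (auto simp: fg_sub_def well_approximated_def)
  moreover have "finite_index (H <#>\<^bsub>grp G\<^esub> st G n) G" for n
    using finite_index_if_st_subset[OF assms(1) Gr.subgroup_set_mult_normal[OF H st_normal]
        Gr.subgroups_subset_set_mult(2)[OF H st_subgroup]] .
  ultimately show "\<exists>\<K>. (\<forall>K\<in>\<K>. finite_index K G) \<and> H = \<Inter>\<K>"
    by (intro exI[of _ "range (\<lambda>n. H <#>\<^bsub>grp G\<^esub> st G n)"]) auto
qed

lemma well_approximated_imp_CSP:
  assumes "well_approximated G" and S: "finite S" "S \<subseteq> G" "generate (grp G) S = G"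
  shows "CSP G"
  unfolding CSP_def
proof (intro allI impI)
  fix K assume "finite_index K G"
  then have K: "subgroup K (grp G)" "finite (rcosets\<^bsub>grp G\<^esub> K)"
    by (simp_all add: finite_index_def)
  define A where "A n = K <#>\<^bsub>grp G\<^esub> st G n" for n
  have "S \<subseteq> carrier (grp G)" "generate (grp G) S = carrier (grp G)"
    using S(2,3) by simp_all
  then obtain F where "finite F" "F \<subseteq> K" "generate (grp G) F = K"
    using Gr.finite_index_subgroup_finitely_generated[OF S(1) _ _ K] by blast
  then have "fg_sub K G"
    using K(1) unfolding fg_sub_def by blast
  then have "(\<Inter>n. A n) = K"
    using assms(1) by (simp add: well_approximated_def A_def)
  moreover have "antimono A"
  proof (rule antimonoI)
    fix m n :: nat assume "m \<le> n"
    with st_antimono have "st G n \<subseteq> st G m"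
      by (rule antimonoD)
    then show "A n \<subseteq> A m"
      unfolding A_def by (rule mono_set_mult[OF order_refl])
  qed
  moreover have "A n = \<Union>{c \<in> rcosets\<^bsub>grp G\<^esub> K. c \<subseteq> A n}" for n
    unfolding A_def
    using Gr.subgroup_eq_Union_rcosets[OF K(1) Gr.subgroup_set_mult_normal[OF K(1) st_normal]
        Gr.subgroups_subset_set_mult(1)[OF K(1) st_subgroup]] .
  ultimately obtain N where "A N = K"
    using antimono_finite_unions_stabilise[OF K(2), of A] by metis
  then have "st G N \<subseteq> K"
    using Gr.subgroups_subset_set_mult(2)[OF K(1) st_subgroup, of N] unfolding A_def by simp
  then show "\<exists>n. st G n \<subseteq> K"
    by blast
qed

lemma LERF_CSP_imp_well_approximated:
  assumes "LERF G" and "CSP G"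
  shows "well_approximated G"
  unfolding well_approximated_def
proof (intro allI impI)
  fix H assume "fg_sub H G"
  then have H: "subgroup H (grp G)"
    by (simp add: fg_sub_def)
  from \<open>fg_sub H G\<close> obtain \<K> where \<K>: "\<And>K. K \<in> \<K> \<Longrightarrow> finite_index K G" "H = \<Inter>\<K>"
    using assms(1) unfolding LERF_def by blast
  have "(\<Inter>n. H <#>\<^bsub>grp G\<^esub> st G n) \<subseteq> K" if "K \<in> \<K>" for K
  proof -
    have "finite_index K G"
      using \<K>(1)[OF that] .
    then have K: "subgroup K (grp G)"
      by (simp add: finite_index_def)
    obtain n where "st G n \<subseteq> K"
      using assms(2) \<open>finite_index K G\<close> unfolding CSP_def by blast
    moreover have "H \<subseteq> K"
      using \<K>(2) \<open>K \<in> \<K>\<close> by blast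
    ultimately have "H <#>\<^bsub>grp G\<^esub> st G n \<subseteq> K <#>\<^bsub>grp G\<^esub> K"
      by (intro mono_set_mult)
    then show ?thesis
      using Gr.subgroup_mult_id[OF K] by blast
  qed
  then show "(\<Inter>n. H <#>\<^bsub>grp G\<^esub> st G n) = H"
    using \<K>(2) Gr.subgroups_subset_set_mult(1)[OF H st_subgroup] by blast
qed

end

theorem lemma2p12:
  fixes G :: "('a::finite list \<Rightarrow> 'a list) set"
  assumes "fg_subgroup_of_Aut G"
  shows "well_approximated G \<longleftrightarrow> LERF G \<and> CSP G"
proof -
  obtain S where "subgroup G AutT" "finite S" "S \<subseteq> G" "generate AutT S = G"
    using assms unfolding fg_subgroup_of_Aut_def by blast
  interpret aut_subgroup G
    by (rule aut_subgroup.intro) fact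
  have "generate (grp G) S = G"
    using group.generate_consistent[OF group_AutT \<open>S \<subseteq> G\<close> \<open>subgroup G AutT\<close>] \<open>generate AutT S = G\<close>
    by (simp add: grp_def)
  then show ?thesis
    using well_approximated_imp_LERF[OF finite_UNIV] well_approximated_imp_CSP
      LERF_CSP_imp_well_approximated \<open>finite S\<close> \<open>S \<subseteq> G\<close>
    by blast
qed

end
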